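(* (i) If $0<c<1$ and $n$ is sufficiently large, then \[ \gamma(n,n^c)<\frac{1}{2\sqrt2}\,n^{1-c/2}. \] (ii) If $0<c<2/5$ and $\varepsilon>0$, then for $n$ sufficiently large, \[ \gamma(n,n^c)>\frac{1-\varepsilon}{2\sqrt2}\,n^{1-c/2}. \] Here $\gamma(n,n^c)$ denotes $\gamma(n,f)$ for the function $f(n)=n^c$.
   Context: A book of size $q$ is a set of $q$ triangles sharing a common edge; the booksize $bk(G)$ is the size of the largest book in $G$, i.e. the maximum over edges $uv$ of the number of common neighbours of $u$ and $v$. For a positive function $f$, $TG(n,f)$ is the set of all graphs $G$ with $n$ vertices and $m$ edges such that every edge of $G$ is contained in a triangle and $m>\max\{n^2/4-f(n)n,\,0\}$. Define $\gamma(n,f)=\min\{bk(G): G\in TG(n,f)\}$. *)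

theory Defs
  imports Complex_Main
begin

definition graph_on :: "nat \<Rightarrow> nat set set \<Rightarrow> bool" where
  "graph_on n E \<longleftrightarrow> (\<forall>e\<in>E. e \<subseteq> {0..<n} \<and> card e = 2)"

definition nbrs :: "nat set set \<Rightarrow> nat \<Rightarrow> nat set" where
  "nbrs E u = {v. {u, v} \<in> E}"

definition bk :: "nat set set \<Rightarrow> nat" where
  "bk E = Max ({card (nbrs E u \<inter> nbrs E v) | u v. {u, v} \<in> E \<and> u \<noteq> v} \<union> {0})"

definition every_edge_in_triangle :: "nat set set \<Rightarrow> bool" where
  "every_edge_in_triangle E \<longleftrightarrow>
     (\<forall>u v. {u, v} \<in> E \<longrightarrow> u \<noteq> v \<longrightarrow> (\<exists>w. {u, w} \<in> E \<and> {v, w} \<in> E))"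

definition TG :: "nat \<Rightarrow> (nat \<Rightarrow> real) \<Rightarrow> nat set set set" where
  "TG n f = {E. graph_on n E \<and> every_edge_in_triangle E \<and>
      real (card E) > max ((real n)\<^sup>2 / 4 - f n * real n) 0}"

definition gamma :: "nat \<Rightarrow> (nat \<Rightarrow> real) \<Rightarrow> nat" where
  "gamma n f = Min (bk ` TG n f)"

end

theory Submission
  imports Defs "HOL-Analysis.Convex"
begin

text \<open>
  Upper bound: take a complete bipartite graph between two halves A and B of n - k^2 vertices,
  with k just above sqrt (2 n^c), and add a k \<times> k grid whose rows are joined to the residue
  classes mod k of A and whose columns to those of B. Every edge lies in a triangle, there are
  more than n^2/4 - n^(1+c) edges, and two adjacent vertices have at most |B|/k + 1, about
  n/(2k), common neighbours.

  Lower bound: suppose every edge lies in a triangle and all books have size at most q. Then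
  the vertices of degree at least 3n/8 span a triangle-free graph, so every edge among them has
  a witness, a common neighbour of low degree. Mantel's theorem in the neighbourhood of each
  witness, a refined Mantel inequality for the high part, and a variance bound showing that
  there are few low vertices give n^2/4 - m \<ge> (1 - o(1)) n^3 / (8 q^2) for the number m of
  edges. With m > n^2/4 - n^(1+c) this forces q > (1 - \<epsilon>) n^(1-c/2) / (2 sqrt 2). The
  argument only needs q^3 \<ge> 2 n^2, so it works for every c < 2/3.
\<close>

section \<open>Arithmetic estimates\<close>

lemma bonferroni_card3:
  assumes "finite X" "finite Y" "finite Z"
  shows "card X + card Y + card Z
           \<le> card (X \<union> Y \<union> Z) + card (X \<inter> Y) + card (X \<inter> Z) + card (Y \<inter> Z)"
proof -
  have XY: "card (X \<union> Y) + card (X \<inter> Y) = card X + card Y"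
    using card_Un_Int assms by metis
  have XYZ: "card (X \<union> Y \<union> Z) + card ((X \<union> Y) \<inter> Z) = card (X \<union> Y) + card Z"
    using card_Un_Int[of "X \<union> Y" Z] assms by simp
  have "(X \<union> Y) \<inter> Z = (X \<inter> Z) \<union> (Y \<inter> Z)" by blast
  then have "card ((X \<union> Y) \<inter> Z) \<le> card (X \<inter> Z) + card (Y \<inter> Z)"
    by (simp add: card_Un_le)
  with XY XYZ show ?thesis by linarith
qed

lemma pos_if_square_le_cube:
  fixes n q :: real
  assumes n0: "0 < n" and q3: "2 * n\<^sup>2 \<le> q ^ 3"
  shows "0 < q"
proof (rule ccontr)
  assume "\<not> 0 < q"
  then have "q ^ 3 \<le> 0" by (simp add: power_le_zero_eq)
  moreover have "0 < n\<^sup>2" using n0 by simp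
  ultimately show False using q3 by linarith
qed

lemma kappa_ineq:
  fixes n q :: real
  assumes n0: "0 < n" and qn: "8 * q \<le> n" and q3: "2 * n\<^sup>2 \<le> q ^ 3"
  defines "\<kappa> \<equiv> 2 * q\<^sup>2 / (n - 4 * q)"
  shows "n * (q + 2 * \<kappa>) \<le> 2 * q\<^sup>2 * \<kappa>"
proof -
  have q0: "0 < q" using n0 q3 by (rule pos_if_square_le_cube)
  have \<kappa>_ge: "2 * q\<^sup>2 / n \<le> \<kappa>"
    unfolding \<kappa>_def using qn q0 by (intro divide_left_mono) auto
  have "q * (2 * n) \<le> q * q\<^sup>2"
  proof -
    have "q * (2 * n) \<le> n * (2 * n)" using qn q0 n0 by (intro mult_right_mono) auto
    also have "\<dots> \<le> q ^ 3" using q3 by (simp add: power2_eq_square)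
    finally show ?thesis by (simp add: power3_eq_cube power2_eq_square)
  qed
  then have q2: "2 * n \<le> q\<^sup>2" using q0 by simp
  have "q * n \<le> 2 * q\<^sup>2 / n * q\<^sup>2"
  proof -
    have "n\<^sup>2 \<le> 2 * q ^ 3" using q3 q0 zero_le_power2[of n] zero_less_power[OF q0, of 3] by linarith
    then have "q * n\<^sup>2 \<le> q * (2 * q ^ 3)" using q0 by (intro mult_left_mono) auto
    then show ?thesis using n0 by (simp add: field_simps power2_eq_square power3_eq_cube)
  qed
  also have "\<dots> \<le> \<kappa> * q\<^sup>2" using \<kappa>_ge by (intro mult_right_mono) auto
  also have "\<dots> \<le> 2 * \<kappa> * (q\<^sup>2 - n)"
  proof -
    have "0 \<le> \<kappa>" using \<kappa>_ge n0 by (smt (verit) divide_nonneg_pos zero_le_power2)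
    then have "\<kappa> * (2 * n) \<le> \<kappa> * q\<^sup>2" using q2 by (intro mult_left_mono)
    then show ?thesis by (simp add: algebra_simps)
  qed
  finally show ?thesis by (simp add: algebra_simps)
qed

lemma load_excess_le_kappa_deficit:
  fixes G u q n h \<kappa> :: real
  assumes G0: "0 \<le> G" and Guq: "G \<le> u * q" and u: "2 * q < u" "u \<le> n / 2"
    and h0: "0 < h" and hn: "h \<le> n" and q0: "0 < q" and k0: "0 \<le> \<kappa>"
    and kk: "\<kappa> * (n - 4 * q) = 2 * q\<^sup>2" and key: "n * (q + 2 * \<kappa>) \<le> 2 * q\<^sup>2 * \<kappa>"
  shows "G * (1 - \<kappa> * (u - 2 * q) / h) \<le> 2 * \<kappa> * (n / 2 - u)"
proof (cases "h \<le> \<kappa> * (u - 2 * q)")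
  case True
  then have "1 - \<kappa> * (u - 2 * q) / h \<le> 0" using h0 by (simp add: field_simps)
  then show ?thesis using G0 k0 u by (smt (verit) mult_nonneg_nonpos mult_nonneg_nonneg)
next
  case False
  define t where "t = u - 2 * q"
  have t0: "0 < t" using u by (simp add: t_def)
  have "q + 2 * \<kappa> \<le> 2 * q\<^sup>2 * \<kappa> / n" using key hn h0 by (simp add: field_simps)
  also have "\<dots> \<le> 2 * q\<^sup>2 * \<kappa> / h" using h0 hn k0 by (intro divide_left_mono) auto
  finally have key_h: "t * (q + 2 * \<kappa>) \<le> t * (2 * q\<^sup>2 * \<kappa> / h)"
    using t0 by (intro mult_left_mono) auto
  have "G * (1 - \<kappa> * t / h) \<le> u * q * (1 - \<kappa> * t / h)"
    using Guq False h0 by (intro mult_right_mono) (auto simp: t_def field_simps)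
  also have "\<dots> \<le> u * q - 2 * q * q * \<kappa> * t / h"
  proof -
    have "2 * q * q * \<kappa> * t \<le> u * q * \<kappa> * t" using u q0 k0 t0 by (intro mult_right_mono) auto
    then show ?thesis using h0 by (simp add: divide_right_mono algebra_simps)
  qed
  also have "\<dots> = 2 * q\<^sup>2 + t * q - t * (2 * q\<^sup>2 * \<kappa> / h)"
    by (simp add: t_def power2_eq_square algebra_simps)
  also have "\<dots> \<le> 2 * \<kappa> * (n / 2 - u)" using key_h kk by (simp add: t_def algebra_simps)
  finally show ?thesis by (simp add: t_def)
qed

text \<open>Per-vertex estimate for the load G of a low vertex with u high neighbours, h being the
  number of high vertices.\<close>
lemma load_le_kappa_deficit:
  fixes G u q n h :: real
  assumes G0: "0 \<le> G" and Guq: "G \<le> u * q" and Gu2: "G \<le> u\<^sup>2 / 2"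
    and u0: "0 \<le> u" and un: "u \<le> n / 2" and h0: "0 < h" and hn: "h \<le> n"
    and qn: "8 * q \<le> n" and q3: "2 * n\<^sup>2 \<le> q ^ 3"
  defines "\<kappa> \<equiv> 2 * q\<^sup>2 / (n - 4 * q)"
  shows "G \<le> 2 * \<kappa> * (n / 2 - u) + \<kappa> * G * max 0 (u - 2 * q) / h"
proof -
  have n0: "0 < n" using h0 hn by linarith
  have q0: "0 < q" using n0 q3 by (rule pos_if_square_le_cube)
  have kk: "\<kappa> * (n - 4 * q) = 2 * q\<^sup>2" using qn q0 by (simp add: \<kappa>_def)
  have k0: "0 \<le> \<kappa>" using qn q0 by (simp add: \<kappa>_def)
  show ?thesis
  proof (cases "u \<le> 2 * q")
    case True
    have "G \<le> (2 * q)\<^sup>2 / 2" using Gu2 True u0 by (smt (verit) divide_right_mono power_mono)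
    also have "\<dots> = 2 * \<kappa> * (n / 2 - 2 * q)" using kk by (simp add: power2_eq_square algebra_simps)
    also have "\<dots> \<le> 2 * \<kappa> * (n / 2 - u)" using True k0 by (intro mult_left_mono) auto
    finally show ?thesis using k0 G0 h0 by (simp add: add_increasing2)
  next
    case False
    have "n * (q + 2 * \<kappa>) \<le> 2 * q\<^sup>2 * \<kappa>" unfolding \<kappa>_def using n0 qn q3 by (rule kappa_ineq)
    then have "G * (1 - \<kappa> * (u - 2 * q) / h) \<le> 2 * \<kappa> * (n / 2 - u)"
      using G0 Guq False un h0 hn q0 k0 kk by (intro load_excess_le_kappa_deficit) auto
    then show ?thesis using False by (simp add: algebra_simps)
  qed
qed

lemma mantel_arith:
  fixes S Z k :: real
  assumes S0: "0 \<le> S" and Z0: "0 \<le> Z" and k0: "0 \<le> k" and main: "2 * S\<^sup>2 + k * Z \<le> k\<^sup>2 * S"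
  shows "S \<le> k\<^sup>2 / 2 - Z / k"
proof (cases "k = 0")
  case True
  then show ?thesis using main S0 by simp
next
  case False
  with k0 have k0: "0 < k" by simp
  have "0 \<le> k * Z" using k0 Z0 by simp
  then have "S * (2 * S) \<le> S * k\<^sup>2" using main by (simp add: power2_eq_square algebra_simps)
  then have half: "S \<le> k\<^sup>2 / 2" using S0 by (cases "S = 0") auto
  have "k * Z \<le> S * (k\<^sup>2 - 2 * S)" using main by (simp add: algebra_simps power2_eq_square)
  also have "\<dots> \<le> (k\<^sup>2 / 2) * (k\<^sup>2 - 2 * S)" using half by (intro mult_right_mono) auto
  finally have "k * Z \<le> k * (k * (k\<^sup>2 / 2 - S))" by (simp add: power2_eq_square algebra_simps)
  then have "Z \<le> k * (k\<^sup>2 / 2 - S)" using k0 by (simp add: mult_le_cancel_left_pos)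
  then have "Z / k \<le> k\<^sup>2 / 2 - S" using k0 by (simp add: divide_le_eq mult.commute)
  then show ?thesis by simp
qed

lemma cubic_lower_bound:
  fixes n f Q \<eta> :: real
  assumes n0: "0 < n" and f0: "0 < f" and fe: "f \<le> \<eta> * n" and Qe: "Q \<le> \<eta> * n"
    and \<eta>0: "0 < \<eta>" and \<eta>1: "\<eta> \<le> 1 / 2000"
  shows "n ^ 3 * (1 / 2 - 37 * \<eta>) \<le> (n\<^sup>2 / 2 - 34 * f * n - 1024 * f\<^sup>2) * (n - 4 * Q)"
proof -
  have "f\<^sup>2 \<le> (\<eta> * n)\<^sup>2" using fe f0 by (intro power_mono) auto
  also have "\<dots> \<le> \<eta> * n\<^sup>2 / 1024"
  proof -
    have "\<eta> * \<eta> \<le> \<eta> / 1024" using \<eta>0 \<eta>1 by (simp add: mult_left_le_one_le)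
    then have "\<eta> * \<eta> * n\<^sup>2 \<le> \<eta> / 1024 * n\<^sup>2" by (rule mult_right_mono) simp
    then show ?thesis by (simp add: power2_eq_square power_mult_distrib mult_ac)
  qed
  finally have "1024 * f\<^sup>2 \<le> \<eta> * n\<^sup>2" by simp
  moreover have "34 * f * n \<le> 34 * \<eta> * n\<^sup>2" using fe n0 by (simp add: power2_eq_square)
  ultimately have X: "n\<^sup>2 * (1 / 2 - 35 * \<eta>) \<le> n\<^sup>2 / 2 - 34 * f * n - 1024 * f\<^sup>2"
    by (simp add: algebra_simps)
  have "n ^ 3 * (1 / 2 - 37 * \<eta>) \<le> n ^ 3 * ((1 / 2 - 35 * \<eta>) * (1 - 4 * \<eta>))"
    using \<eta>0 n0 by (intro mult_left_mono) (auto simp: algebra_simps)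
  also have "\<dots> = (n\<^sup>2 * (1 / 2 - 35 * \<eta>)) * (n * (1 - 4 * \<eta>))"
    by (simp add: power2_eq_square power3_eq_cube)
  also have "\<dots> \<le> (n\<^sup>2 / 2 - 34 * f * n - 1024 * f\<^sup>2) * (n - 4 * Q)"
  proof (rule mult_mono[OF X])
    show "0 \<le> n\<^sup>2 / 2 - 34 * f * n - 1024 * f\<^sup>2"
      using X mult_nonneg_nonneg[OF zero_le_power2[of n], of "1 / 2 - 35 * \<eta>"] \<eta>1 by linarith
  qed (use Qe n0 \<eta>1 in \<open>auto simp: algebra_simps\<close>)
  finally show ?thesis .
qed

text \<open>In this and the next lemma, m is the number of edges and r the number of low vertices.\<close>
lemma few_low_vertices:
  fixes n f Q m r :: real
  assumes n0: "0 < n" and f0: "0 < f" and fn: "2000 * f \<le> n" and Q0: "0 \<le> Q"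
    and Qn: "2000 * Q \<le> n" and mlow: "n\<^sup>2 / 4 - f * n < m" and mup: "m \<le> n\<^sup>2 / 2"
    and r0: "0 \<le> r"
    and var: "3 * n / 8 \<le> 2 * m / n \<Longrightarrow> r * (2 * m / n - 3 * n / 8)\<^sup>2 \<le> m * (n + Q) - 4 * m\<^sup>2 / n"
    and deficit: "r * n / 4 - 3 * r\<^sup>2 / 2 \<le> 2 * (n\<^sup>2 / 4 - m)"
  shows "r < 32 * f"
proof -
  have avg: "n - 4 * f < 4 * m / n"
  proof -
    have "n * (n - 4 * f) < 4 * m" using mlow by (simp add: power2_eq_square algebra_simps)
    then show ?thesis using n0 by (simp add: field_simps)
  qed
  have m0: "0 < m"
  proof -
    have "f * n \<le> n * n / 2000" using fn n0 by (simp add: mult_right_mono field_simps)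
    moreover have "0 < n * n" using n0 by simp
    ultimately show ?thesis using mlow unfolding power2_eq_square by linarith
  qed
  have "4 * m / n = 2 * (2 * m / n)" by simp
  then have th: "n / 10 \<le> 2 * m / n - 3 * n / 8" using avg fn n0 by linarith
  have "m * (n + Q) - 4 * m\<^sup>2 / n = m * (n + Q - 4 * m / n)"
    by (simp add: power2_eq_square algebra_simps)
  also have "\<dots> \<le> m * (Q + 4 * f)" using avg m0 by (intro mult_left_mono) auto
  also have "\<dots> \<le> (n\<^sup>2 / 2) * (n / 400)" using mup Q0 f0 fn Qn by (intro mult_mono) auto
  finally have var_small: "m * (n + Q) - 4 * m\<^sup>2 / n \<le> n ^ 3 / 800"
    by (simp add: power2_eq_square power3_eq_cube)
  have "r * (n / 10)\<^sup>2 \<le> r * (2 * m / n - 3 * n / 8)\<^sup>2"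
    using th r0 n0 by (intro mult_left_mono power_mono) auto
  also have "\<dots> \<le> n ^ 3 / 800" using var th n0 var_small by auto
  finally have "r * n\<^sup>2 \<le> n\<^sup>2 * (n / 8)" by (simp add: power2_eq_square power3_eq_cube field_simps)
  then have r_le: "r \<le> n / 8" using n0 by (simp add: mult.commute)
  have "r * r \<le> r * (n / 8)" using r_le r0 by (rule mult_left_mono)
  then have "r\<^sup>2 \<le> r * (n / 8)" by (simp add: power2_eq_square)
  then have "r * n / 16 \<le> 2 * (n\<^sup>2 / 4 - m)" using deficit by simp
  also have "\<dots> < 2 * (f * n)" using mlow by simp
  finally show ?thesis using n0 by simp
qed

text \<open>This is where the constant 1/(2 sqrt 2) comes from: once 8 Q^2 f = (1 - e)^2 n^2, the
  lower and upper estimates for the number of edges are incompatible.\<close>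
lemma book_size_contradiction:
  fixes n f Q m r e :: real
  defines "\<eta> \<equiv> e / 1000"
  assumes n0: "0 < n" and f0: "0 < f" and fe: "f \<le> \<eta> * n" and Q0: "0 \<le> Q"
    and Qe: "Q \<le> \<eta> * n" and e0: "0 < e" and e1: "e \<le> 1 / 2"
    and QF: "8 * Q\<^sup>2 * f = (1 - e)\<^sup>2 * n\<^sup>2" and mlow: "n\<^sup>2 / 4 - f * n < m"
    and r0: "0 \<le> r" and r32: "r < 32 * f"
    and kappa: "2 * m - r * n - r\<^sup>2 \<le> 2 * Q\<^sup>2 / (n - 4 * Q) * (2 * (n\<^sup>2 / 4 - m) + 3 * r\<^sup>2 / 2)"
  shows False
proof -
  have \<eta>0: "0 < \<eta>" and \<eta>1: "\<eta> \<le> 1 / 2000" using e0 e1 by (auto simp: \<eta>_def)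
  have r2: "r\<^sup>2 \<le> 1024 * f\<^sup>2"
    using power_mono[of r "32 * f" 2] r32 r0 by (simp add: power_mult_distrib)
  have "\<eta> * n \<le> n / 2000" using \<eta>1 n0 by (simp add: mult_right_mono field_simps)
  then have n4Q: "0 < n - 4 * Q" using Qe n0 by linarith
  have k0: "0 \<le> 2 * Q\<^sup>2 / (n - 4 * Q)" using n4Q by simp
  define X where "X = n\<^sup>2 / 2 - 34 * f * n - 1024 * f\<^sup>2"
  define Y where "Y = 2 * f * n + 1536 * f\<^sup>2"
  have "X < 2 * m - r * n - r\<^sup>2"
    using mlow r2 mult_strict_right_mono[OF r32 n0] unfolding X_def by simp
  also have "\<dots> \<le> 2 * Q\<^sup>2 / (n - 4 * Q) * Y"
    using kappa order_trans[OF _ mult_left_mono[OF _ k0]] mlow r2 unfolding Y_def by simp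
  finally have "X * (n - 4 * Q) < 2 * Q\<^sup>2 * Y" using n4Q by (simp add: field_simps)
  also have "\<dots> = (8 * Q\<^sup>2 * f) * (n + 768 * f) / 2" by (simp add: Y_def power2_eq_square algebra_simps)
  also have "\<dots> \<le> (1 - e) * n\<^sup>2 * (n + 768 * (\<eta> * n)) / 2"
  proof -
    have "(1 - e)\<^sup>2 \<le> 1 - e" using e0 e1 by (simp add: power2_eq_square mult_left_le_one_le)
    then have "(1 - e)\<^sup>2 * (n + 768 * f) \<le> (1 - e) * (n + 768 * (\<eta> * n))"
      using fe f0 n0 e1 by (intro mult_mono) auto
    then have "n\<^sup>2 * ((1 - e)\<^sup>2 * (n + 768 * f)) \<le> n\<^sup>2 * ((1 - e) * (n + 768 * (\<eta> * n)))"
      by (intro mult_left_mono) auto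
    then show ?thesis unfolding QF by (intro divide_right_mono) (simp_all add: mult_ac)
  qed
  also have "\<dots> = n ^ 3 * ((1 - e) * (1 + 768 * \<eta>) / 2)"
    by (simp add: power2_eq_square power3_eq_cube algebra_simps)
  finally have "n ^ 3 * (1 / 2 - 37 * \<eta>) < n ^ 3 * ((1 - e) * (1 + 768 * \<eta>) / 2)"
    using cubic_lower_bound[OF n0 f0 fe Qe \<eta>0 \<eta>1] unfolding X_def by linarith
  then have "1 / 2 - 37 * \<eta> < (1 - e) * (1 + 768 * \<eta>) / 2" using n0 by simp
  also have "\<dots> = (1 - e) / 2 + 384 * \<eta> - 384 * (e * \<eta>)" by (simp add: field_simps)
  also have "\<dots> \<le> (1 - e) / 2 + 384 * \<eta>" using e0 \<eta>0 by simp
  finally show False using e0 by (simp add: \<eta>_def field_simps)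
qed

lemma balanced_edge_count:
  fixes A B K f :: real
  assumes AB: "A \<le> B" "B \<le> A + 1" and T1: "1 \<le> A + B"
    and K1: "(K - 1)\<^sup>2 \<le> 2 * f" and K2: "K\<^sup>2 \<le> 4 * f"
  shows "(A + B + K\<^sup>2)\<^sup>2 / 4 - f * (A + B + K\<^sup>2) < A * B + K * (A + B)"
proof -
  define T where "T = A + B"
  have "(B - A)\<^sup>2 \<le> 1" using AB by (simp add: power_le_one)
  then have T2: "T\<^sup>2 - 1 \<le> 4 * (A * B)" by (simp add: T_def power2_eq_square algebra_simps)
  have "T * (1 / 2) \<le> T * (f + K - K\<^sup>2 / 2)"
    using K1 T1 by (intro mult_left_mono) (auto simp: T_def power2_eq_square algebra_simps)
  moreover have "0 \<le> K\<^sup>2 * (f - K\<^sup>2 / 4)" using K2 by simp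
  moreover have "(T + K\<^sup>2)\<^sup>2 / 4 - f * (T + K\<^sup>2)
      = T\<^sup>2 / 4 - T * (f + K - K\<^sup>2 / 2) - K\<^sup>2 * (f - K\<^sup>2 / 4) + K * T"
    by (simp add: power2_eq_square algebra_simps)
  moreover have "1 \<le> T" using T1 by (simp add: T_def)
  ultimately have "(T + K\<^sup>2)\<^sup>2 / 4 - f * (T + K\<^sup>2) < A * B + K * T"
    using T2 by linarith
  then show ?thesis by (simp add: T_def)
qed

section \<open>Graphs with small books in which every edge lies in a triangle\<close>

locale nbr_graph =
  fixes V :: "nat set" and N :: "nat \<Rightarrow> nat set"
  assumes finite_V: "finite V" and N_subset: "N x \<subseteq> V" and N_sym: "y \<in> N x \<Longrightarrow> x \<in> N y"
begin

lemma finite_N: "finite (N x)"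
  using finite_V N_subset finite_subset by blast

lemma sum_nbrs_swap:
  assumes "finite X" "finite Y"
  shows "(\<Sum>x\<in>X. \<Sum>y\<in>N x \<inter> Y. F x y) = (\<Sum>y\<in>Y. \<Sum>x\<in>N y \<inter> X. (F x y :: real))"
proof -
  have "(\<Sum>x\<in>X. \<Sum>y\<in>N x \<inter> Y. F x y) = (\<Sum>x\<in>X. \<Sum>y\<in>{y. y \<in> Y \<and> y \<in> N x}. F x y)"
    by (intro sum.cong refl) auto
  also have "\<dots> = (\<Sum>y\<in>Y. \<Sum>x\<in>{x. x \<in> X \<and> y \<in> N x}. F x y)"
    by (rule sum.swap_restrict[OF assms])
  also have "\<dots> = (\<Sum>y\<in>Y. \<Sum>x\<in>N y \<inter> X. F x y)"
    by (intro sum.cong refl) (auto intro: N_sym)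
  finally show ?thesis .
qed

lemma sum_card_nbrs_swap:
  assumes "finite X" "finite Y"
  shows "(\<Sum>x\<in>X. real (card (N x \<inter> Y))) = (\<Sum>y\<in>Y. real (card (N y \<inter> X)))"
  using sum_nbrs_swap[OF assms, of "\<lambda>_ _. 1"] by simp

lemma sum_over_arcs_symmetric:
  assumes "finite W"
  shows "(\<Sum>x\<in>W. \<Sum>y\<in>N x \<inter> W. g x + g y) = 2 * (\<Sum>x\<in>W. real (card (N x \<inter> W)) * g x)"
proof -
  have "(\<Sum>x\<in>W. \<Sum>y\<in>N x \<inter> W. g y) = (\<Sum>x\<in>W. \<Sum>y\<in>N x \<inter> W. g x)"
    using sum_nbrs_swap[OF assms assms, of "\<lambda>x y. g y"] by simp
  then show ?thesis by (simp add: sum.distrib)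
qed

text \<open>Summing the hypothesis over the arcs of W and applying Cauchy-Schwarz to the degrees
  gives the bound; for z = 0 it is Mantel's theorem.\<close>
lemma refined_mantel:
  fixes W :: "nat set" and z :: "nat \<Rightarrow> nat \<Rightarrow> real"
  assumes finW: "finite W" and z0: "\<And>x y. 0 \<le> z x y"
    and arc: "\<And>x y. x \<in> W \<Longrightarrow> y \<in> N x \<inter> W \<Longrightarrow>
         real (card (N x \<inter> W)) + real (card (N y \<inter> W)) + z x y \<le> real (card W)"
  shows "(\<Sum>x\<in>W. real (card (N x \<inter> W)))
         \<le> (real (card W))\<^sup>2 / 2 - (\<Sum>x\<in>W. \<Sum>y\<in>N x \<inter> W. z x y) / real (card W)"
proof -
  define d where "d x = real (card (N x \<inter> W))" for x
  define k where "k = real (card W)"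
  define S where "S = (\<Sum>x\<in>W. d x)"
  define Z where "Z = (\<Sum>x\<in>W. \<Sum>y\<in>N x \<inter> W. z x y)"
  have Z0: "0 \<le> Z" unfolding Z_def by (intro sum_nonneg z0)
  have "2 * (\<Sum>x\<in>W. (d x)\<^sup>2) + Z = (\<Sum>x\<in>W. \<Sum>y\<in>N x \<inter> W. d x + d y + z x y)"
    using sum_over_arcs_symmetric[OF finW, of d]
    by (simp add: Z_def sum.distrib d_def power2_eq_square)
  also have "\<dots> \<le> (\<Sum>x\<in>W. \<Sum>y\<in>N x \<inter> W. k)"
    by (intro sum_mono) (use arc in \<open>auto simp: d_def k_def\<close>)
  also have "\<dots> = k * S"
    by (simp add: S_def d_def sum_distrib_left mult.commute)
  finally have arcs: "2 * (\<Sum>x\<in>W. (d x)\<^sup>2) + Z \<le> k * S" .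
  have "S\<^sup>2 \<le> (\<Sum>x\<in>W. (d x)\<^sup>2) * k"
    unfolding S_def k_def by (rule sum_squared_le_sum_of_squares)
  then have "2 * S\<^sup>2 + k * Z \<le> k * (2 * (\<Sum>x\<in>W. (d x)\<^sup>2) + Z)"
    by (simp add: algebra_simps)
  also have "\<dots> \<le> k * (k * S)" using arcs by (intro mult_left_mono) (auto simp: k_def)
  finally have main: "2 * S\<^sup>2 + k * Z \<le> k\<^sup>2 * S" by (simp add: power2_eq_square)
  have "0 \<le> S" unfolding S_def d_def by (intro sum_nonneg) auto
  from mantel_arith[OF this Z0 _ main] show ?thesis by (simp add: S_def Z_def d_def k_def)
qed

lemma sum_degree_squares_le:
  assumes book: "\<And>x y. y \<in> N x \<Longrightarrow> real (card (N x \<inter> N y)) \<le> q"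
  shows "2 * (\<Sum>x\<in>V. (real (card (N x)))\<^sup>2) \<le> (real (card V) + q) * (\<Sum>x\<in>V. real (card (N x)))"
proof -
  define d where "d x = real (card (N x))" for x
  have NV: "N x \<inter> V = N x" for x using N_subset by blast
  have pair: "d x + d y \<le> real (card V) + q" if "y \<in> N x" for x y
  proof -
    have "card (N x) + card (N y) = card (N x \<union> N y) + card (N x \<inter> N y)"
      using card_Un_Int finite_N by metis
    moreover have "card (N x \<union> N y) \<le> card V" using N_subset finite_V by (intro card_mono) auto
    ultimately show ?thesis using book[OF that] unfolding d_def by linarith
  qed
  have "2 * (\<Sum>x\<in>V. (d x)\<^sup>2) = (\<Sum>x\<in>V. \<Sum>y\<in>N x \<inter> V. d x + d y)"
    using sum_over_arcs_symmetric[OF finite_V, of d] by (simp add: NV d_def power2_eq_square)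
  also have "\<dots> \<le> (\<Sum>x\<in>V. \<Sum>y\<in>N x \<inter> V. real (card V) + q)"
    by (intro sum_mono pair) auto
  also have "\<dots> = (real (card V) + q) * (\<Sum>x\<in>V. d x)"
    by (simp add: NV d_def sum_distrib_left mult.commute)
  finally show ?thesis unfolding d_def .
qed

end

locale small_book_graph = nbr_graph +
  fixes q :: real
  assumes book_le: "\<And>x y. y \<in> N x \<Longrightarrow> real (card (N x \<inter> N y)) \<le> q"
    and edge_in_triangle: "\<And>x y. y \<in> N x \<Longrightarrow> \<exists>w. w \<in> N x \<inter> N y"
    and q_small: "24 * q < real (card V)"
    and q_large: "2 * (real (card V))\<^sup>2 \<le> q ^ 3"
begin

abbreviation "nV \<equiv> real (card V)"

definition "high = {v\<in>V. 3 * nV / 8 \<le> real (card (N v))}"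
definition "low = V - high"

abbreviation "nH \<equiv> real (card high)"
abbreviation "nL \<equiv> real (card low)"

definition "witness x y = (SOME w. w \<in> N x \<inter> N y)"
definition "high_arcs = Sigma high (\<lambda>x. N x \<inter> high)"
definition "load w = real (card {p\<in>high_arcs. witness (fst p) (snd p) = w})"
definition "hdeg w = real (card (N w \<inter> high))"
definition "missed x y = real (card (high - (N x \<union> N y)))"

definition "edges = (\<Sum>x\<in>V. real (card (N x))) / 2"
definition "high_sum = (\<Sum>x\<in>high. real (card (N x \<inter> high)))"
definition "missed_sum = (\<Sum>x\<in>high. \<Sum>y\<in>N x \<inter> high. missed x y)"
definition "deficit = (\<Sum>w\<in>low. nV / 2 - hdeg w)"
definition "kappa = 2 * q\<^sup>2 / (nV - 4 * q)"

lemma finite_high: "finite high" and finite_low: "finite low"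
  and high_low_disjoint: "high \<inter> low = {}"
  and high_Un_low: "high \<union> low = V"
  using finite_V by (auto simp: high_def low_def)

lemma card_high_add_low: "nH + nL = nV"
  using card_Un_disjoint[OF finite_high finite_low high_low_disjoint] high_Un_low by simp

lemma q_pos: "0 < q"
proof (rule ccontr)
  assume "\<not> 0 < q"
  then have "q ^ 3 \<le> 0" by (simp add: power_le_zero_eq)
  with q_large have "nV\<^sup>2 \<le> 0" by linarith
  then have "nV = 0" by simp
  then have "q ^ 3 < 0" using q_small by (simp add: power_less_zero_eq)
  moreover have "0 \<le> 2 * nV\<^sup>2" by simp
  ultimately show False using q_large by linarith
qed

text \<open>Three pairwise adjacent vertices of degree at least 3n/8 would need 9n/8 - 3q \<le> n
  vertices in the union of their neighbourhoods.\<close>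
lemma high_nbrs_disjoint:
  assumes x: "x \<in> high" and y: "y \<in> high" and xy: "y \<in> N x"
  shows "N x \<inter> N y \<inter> high = {}"
proof (rule ccontr)
  assume "N x \<inter> N y \<inter> high \<noteq> {}"
  then obtain w where w: "w \<in> N x" "w \<in> N y" "w \<in> high" by blast
  have "card (N x) + card (N y) + card (N w)
     \<le> card (N x \<union> N y \<union> N w) + card (N x \<inter> N y) + card (N x \<inter> N w) + card (N y \<inter> N w)"
    by (rule bonferroni_card3[OF finite_N finite_N finite_N])
  moreover have "card (N x \<union> N y \<union> N w) \<le> card V"
    using N_subset finite_V by (intro card_mono) auto
  ultimately have "real (card (N x)) + real (card (N y)) + real (card (N w))
     \<le> nV + real (card (N x \<inter> N y)) + real (card (N x \<inter> N w)) + real (card (N y \<inter> N w))"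
    by linarith
  moreover have "real (card (N x \<inter> N y)) \<le> q" "real (card (N x \<inter> N w)) \<le> q"
    "real (card (N y \<inter> N w)) \<le> q" using book_le xy w by auto
  moreover have "3 * nV / 8 \<le> real (card (N x))" "3 * nV / 8 \<le> real (card (N y))"
    "3 * nV / 8 \<le> real (card (N w))" using x y w by (auto simp: high_def)
  ultimately show False using q_small by linarith
qed

lemma witness_in:
  assumes x: "x \<in> high" and y: "y \<in> N x \<inter> high"
  shows "witness x y \<in> N x \<inter> N y" "witness x y \<in> low"
proof -
  obtain w where "w \<in> N x \<inter> N y" using edge_in_triangle y by blast
  then show w: "witness x y \<in> N x \<inter> N y" unfolding witness_def by (rule someI)
  moreover have "N x \<inter> N y \<inter> high = {}" using high_nbrs_disjoint x y by blast
  ultimately show "witness x y \<in> low" using N_subset by (auto simp: low_def)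
qed

lemma high_arc_partition:
  assumes W: "W \<subseteq> high" and x: "x \<in> W" and y: "y \<in> N x \<inter> W"
  shows "card (N x \<inter> W) + card (N y \<inter> W) + card (W - (N x \<union> N y)) = card W"
proof -
  have finW: "finite W" using W finite_high finite_subset by blast
  have "N x \<inter> N y \<inter> high = {}" using high_nbrs_disjoint W x y by blast
  then have "card (N x \<inter> W) + card (N y \<inter> W) = card ((N x \<inter> W) \<union> (N y \<inter> W))"
    using finW W by (subst card_Un_disjoint) auto
  also have "\<dots> + card (W - (N x \<union> N y))
      = card ((N x \<inter> W) \<union> (N y \<inter> W) \<union> (W - (N x \<union> N y)))"
    by (rule card_Un_disjoint[symmetric]) (use finW in auto)
  also have "(N x \<inter> W) \<union> (N y \<inter> W) \<union> (W - (N x \<union> N y)) = W" by blast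
  finally show ?thesis .
qed

lemma finite_high_arcs: "finite high_arcs"
  unfolding high_arcs_def using finite_high by auto

lemma witness_high_arcs: "(\<lambda>p. witness (fst p) (snd p)) ` high_arcs \<subseteq> low"
  by (auto simp: high_arcs_def intro: witness_in)

lemma high_sum_eq_sum_load: "high_sum = (\<Sum>w\<in>low. load w)"
proof -
  have "high_sum = (\<Sum>p\<in>high_arcs. 1)"
    unfolding high_sum_def high_arcs_def using finite_high by (simp add: card_SigmaI)
  also have "\<dots> = (\<Sum>w\<in>low. \<Sum>p\<in>{p\<in>high_arcs. witness (fst p) (snd p) = w}. 1)"
    by (rule sum.group[symmetric, OF finite_high_arcs finite_low witness_high_arcs])
  finally show ?thesis by (simp add: load_def)
qed

text \<open>A high neighbour of the witness w of xy is either missed by xy or lies in one of the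
  books on wx and wy.\<close>
lemma hdeg_witness_le:
  assumes x: "x \<in> high" and y: "y \<in> N x \<inter> high"
  shows "hdeg (witness x y) - 2 * q \<le> missed x y"
proof -
  define w where "w = witness x y"
  define U where "U = N w \<inter> high"
  have w: "x \<in> N w" "y \<in> N w" using witness_in[OF x y] N_sym by (auto simp: w_def)
  have "card U \<le> card ((U - (N x \<union> N y)) \<union> (U \<inter> N x) \<union> (U \<inter> N y))"
    using finite_high by (intro card_mono) (auto simp: U_def)
  also have "\<dots> \<le> card (U - (N x \<union> N y)) + card (U \<inter> N x) + card (U \<inter> N y)"
    by (meson card_Un_le add_le_mono le_refl order_trans)
  also have "\<dots> \<le> card (high - (N x \<union> N y)) + card (N w \<inter> N x) + card (N w \<inter> N y)"
    using finite_high finite_N by (intro add_mono card_mono) (auto simp: U_def)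
  finally have "real (card U)
      \<le> real (card (high - (N x \<union> N y))) + real (card (N w \<inter> N x)) + real (card (N w \<inter> N y))"
    by linarith
  moreover have "real (card (N w \<inter> N x)) \<le> q" "real (card (N w \<inter> N y)) \<le> q"
    using book_le w by auto
  ultimately show ?thesis by (simp add: hdeg_def missed_def U_def w_def)
qed

lemma sum_load_excess_le_missed_sum:
  "(\<Sum>w\<in>low. load w * max 0 (hdeg w - 2 * q)) \<le> missed_sum"
proof -
  let ?wit = "\<lambda>p. witness (fst p) (snd p)"
  have "(\<Sum>w\<in>low. load w * max 0 (hdeg w - 2 * q))
      = (\<Sum>w\<in>low. \<Sum>p\<in>{p\<in>high_arcs. ?wit p = w}. max 0 (hdeg (?wit p) - 2 * q))"
    by (simp add: load_def)
  also have "\<dots> = (\<Sum>p\<in>high_arcs. max 0 (hdeg (?wit p) - 2 * q))"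
    by (rule sum.group[OF finite_high_arcs finite_low witness_high_arcs])
  also have "\<dots> \<le> (\<Sum>p\<in>high_arcs. missed (fst p) (snd p))"
  proof (rule sum_mono)
    fix p assume "p \<in> high_arcs"
    then have "hdeg (?wit p) - 2 * q \<le> missed (fst p) (snd p)"
      by (auto simp: high_arcs_def intro: hdeg_witness_le)
    moreover have "0 \<le> missed (fst p) (snd p)" by (simp add: missed_def)
    ultimately show "max 0 (hdeg (?wit p) - 2 * q) \<le> missed (fst p) (snd p)" by simp
  qed
  also have "\<dots> = missed_sum"
    unfolding high_arcs_def missed_sum_def using finite_high by (subst sum.Sigma) (auto simp: split_beta)
  finally show ?thesis .
qed

lemma load_le_sum_high_nbrs:
  fixes w :: nat
  defines "U \<equiv> N w \<inter> high"
  shows "load w \<le> (\<Sum>x\<in>U. real (card (N x \<inter> U)))"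
proof -
  have finU: "finite U" using finite_high by (simp add: U_def)
  have "{p\<in>high_arcs. witness (fst p) (snd p) = w} \<subseteq> Sigma U (\<lambda>x. N x \<inter> U)"
  proof
    fix p assume "p \<in> {p\<in>high_arcs. witness (fst p) (snd p) = w}"
    then obtain x y where "p = (x, y)" "x \<in> high" "y \<in> N x \<inter> high" "witness x y = w"
      by (auto simp: high_arcs_def)
    then show "p \<in> Sigma U (\<lambda>x. N x \<inter> U)" using witness_in[of x y] N_sym by (auto simp: U_def)
  qed
  then have "load w \<le> real (card (Sigma U (\<lambda>x. N x \<inter> U)))"
    unfolding load_def using finU by (intro of_nat_mono card_mono) auto
  also have "\<dots> = (\<Sum>x\<in>U. real (card (N x \<inter> U)))" using finU by (simp add: card_SigmaI)
  finally show ?thesis .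
qed

lemma load_le_hdeg_book: "w \<in> low \<Longrightarrow> load w \<le> hdeg w * q"
proof -
  assume w: "w \<in> low"
  define U where "U = N w \<inter> high"
  have "(\<Sum>x\<in>U. real (card (N x \<inter> U))) \<le> (\<Sum>x\<in>U. q)"
  proof (rule sum_mono)
    fix x assume "x \<in> U"
    then have "real (card (N x \<inter> U)) \<le> real (card (N x \<inter> N w))"
      using finite_N by (auto simp: U_def intro!: card_mono)
    also have "\<dots> \<le> q" using book_le \<open>x \<in> U\<close> N_sym by (auto simp: U_def)
    finally show "real (card (N x \<inter> U)) \<le> q" .
  qed
  then show ?thesis using load_le_sum_high_nbrs[of w] by (simp add: hdeg_def U_def)
qed

text \<open>The high neighbours of a low vertex span a triangle-free graph, so Mantel applies.\<close>
lemma load_le_half_hdeg_square: "w \<in> low \<Longrightarrow> load w \<le> (hdeg w)\<^sup>2 / 2"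
proof -
  assume w: "w \<in> low"
  define U where "U = N w \<inter> high"
  have "(\<Sum>x\<in>U. real (card (N x \<inter> U)))
      \<le> (real (card U))\<^sup>2 / 2 - (\<Sum>x\<in>U. \<Sum>y\<in>N x \<inter> U. real (card (U - (N x \<union> N y))))
          / real (card U)"
  proof (rule refined_mantel)
    show "finite U" using finite_high by (simp add: U_def)
    show "real (card (N x \<inter> U)) + real (card (N y \<inter> U)) + real (card (U - (N x \<union> N y)))
        \<le> real (card U)" if "x \<in> U" "y \<in> N x \<inter> U" for x y
      using high_arc_partition[of U x y] that by (simp add: U_def)
  qed simp
  moreover have "0 \<le> (\<Sum>x\<in>U. \<Sum>y\<in>N x \<inter> U. real (card (U - (N x \<union> N y)))) / real (card U)"
    by (intro divide_nonneg_nonneg sum_nonneg) auto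
  ultimately show ?thesis using load_le_sum_high_nbrs[of w] by (simp add: hdeg_def U_def)
qed

lemma degree_low: "w \<in> low \<Longrightarrow> real (card (N w)) < 3 * nV / 8"
  by (auto simp: low_def high_def)

lemma hdeg_le_degree: "hdeg w \<le> real (card (N w))"
  unfolding hdeg_def using finite_N by (simp add: card_mono)

lemma kappa_nonneg: "0 \<le> kappa"
  unfolding kappa_def using q_small q_pos by simp

lemma missed_sum_div_nonneg: "0 \<le> missed_sum / nH"
  unfolding missed_sum_def missed_def by (intro divide_nonneg_nonneg sum_nonneg) auto

lemma degree_split: "real (card (N x)) = real (card (N x \<inter> high)) + real (card (N x \<inter> low))"
proof -
  have "N x = (N x \<inter> high) \<union> (N x \<inter> low)" using N_subset high_Un_low by blast
  then have "card (N x) = card ((N x \<inter> high) \<union> (N x \<inter> low))" by simp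
  also have "\<dots> = card (N x \<inter> high) + card (N x \<inter> low)"
    by (rule card_Un_disjoint) (use finite_N high_low_disjoint in auto)
  finally show ?thesis by simp
qed

lemma twice_edges_le: "2 * edges \<le> high_sum + nL * nV - 2 * deficit + nL\<^sup>2"
proof -
  let ?d = "\<lambda>x. real (card (N x))"
  have "2 * edges = (\<Sum>x\<in>high. ?d x) + (\<Sum>x\<in>low. ?d x)"
    using sum.union_disjoint[OF finite_high finite_low high_low_disjoint, of ?d] high_Un_low
    by (simp add: edges_def)
  also have "(\<Sum>x\<in>high. ?d x) = high_sum + (\<Sum>w\<in>low. hdeg w)"
    using sum_card_nbrs_swap[OF finite_high finite_low]
    by (simp add: degree_split sum.distrib high_sum_def hdeg_def)
  also have "(\<Sum>x\<in>low. ?d x) \<le> (\<Sum>w\<in>low. hdeg w) + (\<Sum>x\<in>low. nL)"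
    unfolding degree_split sum.distrib hdeg_def
    by (intro add_left_mono sum_mono) (simp add: card_mono finite_low)
  also have "(\<Sum>w\<in>low. hdeg w) = nL * nV / 2 - deficit"
    by (simp add: deficit_def sum_subtractf)
  finally show ?thesis by (simp add: power2_eq_square algebra_simps)
qed

lemma deficit_ge: "nL * nV / 8 \<le> deficit"
proof -
  have "(\<Sum>w\<in>low. nV / 8) \<le> deficit"
    unfolding deficit_def
  proof (intro sum_mono)
    fix w assume "w \<in> low"
    then show "nV / 8 \<le> nV / 2 - hdeg w" using degree_low[of w] hdeg_le_degree[of w] by linarith
  qed
  then show ?thesis by simp
qed

lemma deficit_nonneg: "0 \<le> deficit"
  using deficit_ge by (smt (verit) of_nat_0_le_iff mult_nonneg_nonneg divide_nonneg_pos)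

lemma high_sum_le_mantel: "high_sum \<le> nH\<^sup>2 / 2 - missed_sum / nH"
  unfolding high_sum_def missed_sum_def
proof (rule refined_mantel[OF finite_high])
  show "real (card (N x \<inter> high)) + real (card (N y \<inter> high)) + missed x y \<le> nH"
    if "x \<in> high" "y \<in> N x \<inter> high" for x y
    using high_arc_partition[of high x y] that by (simp add: missed_def)
qed (simp add: missed_def)

lemma high_sum_le_kappa: "high_sum \<le> kappa * (2 * deficit + missed_sum / nH)"
proof (cases "high = {}")
  case True
  then show ?thesis
    using kappa_nonneg deficit_nonneg by (simp add: high_sum_def missed_sum_def)
next
  case False
  then have h0: "0 < nH" using finite_high by (simp add: card_gt_0_iff)
  let ?e = "\<lambda>w. max 0 (hdeg w - 2 * q)"
  have "high_sum = (\<Sum>w\<in>low. load w)" by (rule high_sum_eq_sum_load)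
  also have "\<dots> \<le> (\<Sum>w\<in>low. 2 * kappa * (nV / 2 - hdeg w) + kappa * load w * ?e w / nH)"
  proof (intro sum_mono)
    fix w assume w: "w \<in> low"
    show "load w \<le> 2 * kappa * (nV / 2 - hdeg w) + kappa * load w * ?e w / nH"
      unfolding kappa_def
    proof (rule load_le_kappa_deficit)
      show "0 \<le> load w" by (simp add: load_def)
      show "load w \<le> hdeg w * q" using w by (rule load_le_hdeg_book)
      show "load w \<le> (hdeg w)\<^sup>2 / 2" using w by (rule load_le_half_hdeg_square)
      show "0 \<le> hdeg w" by (simp add: hdeg_def)
      show "hdeg w \<le> nV / 2" using degree_low[OF w] hdeg_le_degree[of w] by simp
      show "nH \<le> nV" using card_high_add_low by simp
      show "0 < nH" by (rule h0)
      show "8 * q \<le> nV" using q_small q_pos by simp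
    qed (rule q_large)
  qed
  also have "\<dots> = 2 * kappa * deficit + kappa * (\<Sum>w\<in>low. load w * ?e w) / nH"
    by (simp add: deficit_def sum.distrib sum_distrib_left sum_divide_distrib mult.assoc)
  also have "\<dots> \<le> 2 * kappa * deficit + kappa * missed_sum / nH"
    using sum_load_excess_le_missed_sum kappa_nonneg h0
    by (intro add_left_mono divide_right_mono mult_left_mono) auto
  finally show ?thesis by (simp add: algebra_simps)
qed

lemma nV_pos: "0 < nV"
  using q_small q_pos by linarith

text \<open>Every low vertex deviates by at least 2m/n - 3n/8 from the average degree 2m/n, while the
  sum of the squared degrees is controlled by the book size.\<close>
lemma low_variance:
  assumes th0: "3 * nV / 8 \<le> 2 * edges / nV"
  shows "nL * (2 * edges / nV - 3 * nV / 8)\<^sup>2 \<le> edges * (nV + q) - 4 * edges\<^sup>2 / nV"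
proof -
  define d where "d x = real (card (N x))" for x
  define a where "a = 2 * edges / nV"
  define th where "th = 2 * edges / nV - 3 * nV / 8"
  have sd: "(\<Sum>x\<in>V. d x) = 2 * edges" by (simp add: edges_def d_def)
  have "nL * th\<^sup>2 = (\<Sum>w\<in>low. th\<^sup>2)" by simp
  also have "\<dots> \<le> (\<Sum>w\<in>low. (d w - a)\<^sup>2)"
  proof (intro sum_mono)
    fix w assume "w \<in> low"
    then have "th \<le> a - d w" using degree_low unfolding th_def a_def d_def by fastforce
    moreover have "0 \<le> th" using th0 th_def by simp
    ultimately have "th\<^sup>2 \<le> (a - d w)\<^sup>2" by (intro power_mono) auto
    then show "th\<^sup>2 \<le> (d w - a)\<^sup>2" by (simp add: power2_commute)
  qed
  also have "\<dots> \<le> (\<Sum>w\<in>V. (d w - a)\<^sup>2)"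
    using high_Un_low by (intro sum_mono2[OF finite_V]) auto
  also have "\<dots> = (\<Sum>w\<in>V. (d w)\<^sup>2) - 2 * a * (2 * edges) + nV * a\<^sup>2"
  proof -
    have "(\<Sum>w\<in>V. 2 * d w * a) = 2 * a * (2 * edges)"
      by (simp add: sum_distrib_right[symmetric] sum_distrib_left[symmetric] sd mult.commute)
    then show ?thesis by (simp add: power2_diff sum.distrib sum_subtractf)
  qed
  also have "\<dots> = (\<Sum>w\<in>V. (d w)\<^sup>2) - 4 * edges\<^sup>2 / nV"
    using nV_pos by (simp add: a_def power2_eq_square field_simps)
  also have "\<dots> \<le> edges * (nV + q) - 4 * edges\<^sup>2 / nV"
    using sum_degree_squares_le[OF book_le] sd unfolding d_def by (simp add: algebra_simps)
  finally show ?thesis by (simp add: th_def)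
qed

lemma twice_edges_le_mantel:
  "2 * edges \<le> nV\<^sup>2 / 2 + 3 * nL\<^sup>2 / 2 - 2 * deficit - missed_sum / nH"
proof -
  have "(nV - nL)\<^sup>2 / 2 + nL * nV + nL\<^sup>2 = nV\<^sup>2 / 2 + 3 * nL\<^sup>2 / 2"
    by (simp add: power2_eq_square field_simps)
  moreover have "nH = nV - nL" using card_high_add_low by simp
  ultimately show ?thesis using twice_edges_le high_sum_le_mantel by simp
qed

lemma edges_deficit_bound: "nL * nV / 4 - 3 * nL\<^sup>2 / 2 \<le> 2 * (nV\<^sup>2 / 4 - edges)"
  using twice_edges_le_mantel deficit_ge missed_sum_div_nonneg by simp

lemma edges_kappa_bound:
  "2 * edges - nL * nV - nL\<^sup>2 \<le> kappa * (2 * (nV\<^sup>2 / 4 - edges) + 3 * nL\<^sup>2 / 2)"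
proof -
  have "2 * edges - nL * nV - nL\<^sup>2 \<le> high_sum"
    using twice_edges_le deficit_nonneg by linarith
  also have "\<dots> \<le> kappa * (2 * deficit + missed_sum / nH)" by (rule high_sum_le_kappa)
  also have "\<dots> \<le> kappa * (2 * (nV\<^sup>2 / 4 - edges) + 3 * nL\<^sup>2 / 2)"
    using twice_edges_le_mantel kappa_nonneg by (intro mult_left_mono) auto
  finally show ?thesis .
qed

end

lemma graph_on_edge:
  assumes "graph_on n E" "{u, v} \<in> E"
  shows "u \<noteq> v" "u < n" "v < n"
proof -
  have c: "card {u, v} = 2" and s: "{u, v} \<subseteq> {0..<n}" using assms by (auto simp: graph_on_def)
  show "u \<noteq> v" using c by (cases "u = v") auto
  show "u < n" "v < n" using s by auto
qed

lemma graph_on_finite: "graph_on n E \<Longrightarrow> finite E"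
  by (rule finite_subset[of E "Pow {0..<n}"]) (auto simp: graph_on_def)

lemma graph_on_nbr_graph:
  assumes g: "graph_on n E"
  shows "nbr_graph {..<n} (nbrs E)"
proof
  show "nbrs E x \<subseteq> {..<n}" for x using graph_on_edge[OF g] by (auto simp: nbrs_def)
  show "y \<in> nbrs E x \<Longrightarrow> x \<in> nbrs E y" for x y by (simp add: nbrs_def insert_commute)
qed simp

lemma card_edges_at:
  assumes g: "graph_on n E"
  shows "card {e\<in>E. x \<in> e} = card (nbrs E x)"
proof (rule bij_betw_same_card[symmetric])
  show "bij_betw (\<lambda>v. {x, v}) (nbrs E x) {e\<in>E. x \<in> e}"
  proof (rule bij_betwI')
    show "({x, v} = {x, w}) = (v = w)" for v w by (auto simp: doubleton_eq_iff)
    show "{x, v} \<in> {e\<in>E. x \<in> e}" if "v \<in> nbrs E x" for v using that by (simp add: nbrs_def)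
    show "\<exists>v\<in>nbrs E x. e = {x, v}" if e: "e \<in> {e\<in>E. x \<in> e}" for e
    proof -
      have "card e = 2" using e g by (auto simp: graph_on_def)
      then obtain a b where ab: "e = {a, b}" by (auto simp: card_2_iff)
      moreover have "x = a \<or> x = b" using ab e by auto
      ultimately show ?thesis
      proof (elim disjE)
        assume "e = {a, b}" "x = a" then show ?thesis using e by (auto simp: nbrs_def)
      next
        assume "e = {a, b}" "x = b" then show ?thesis using e by (auto simp: nbrs_def insert_commute)
      qed
    qed
  qed
qed

lemma handshake:
  assumes g: "graph_on n E"
  shows "(\<Sum>x<n. card (nbrs E x)) = 2 * card E"
proof -
  have "2 * card E = (\<Sum>e\<in>E. card e)" using g by (simp add: graph_on_def)
  also have "\<dots> = (\<Sum>e\<in>E. \<Sum>x<n. if x \<in> e then 1 else 0)"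
  proof (intro sum.cong refl)
    fix e assume "e \<in> E"
    then have "e \<subseteq> {..<n}" using g by (simp add: graph_on_def atLeast0LessThan)
    then have "card e = (\<Sum>x\<in>{..<n} \<inter> e. 1)" by (simp add: Int_absorb1)
    then show "card e = (\<Sum>x<n. if x \<in> e then 1 else 0)"
      by (simp only: sum.inter_restrict[OF finite_lessThan])
  qed
  also have "\<dots> = (\<Sum>x<n. \<Sum>e\<in>E. if x \<in> e then 1 else 0)" by (rule sum.swap)
  also have "\<dots> = (\<Sum>x<n. card {e\<in>E. x \<in> e})"
  proof (intro sum.cong refl)
    fix x
    have "(\<Sum>e\<in>E. if x \<in> e then 1 else 0) = card (E \<inter> {e. x \<in> e})"
      using sum.inter_restrict[OF graph_on_finite[OF g], of "\<lambda>_. 1::nat" "{e. x \<in> e}"] by simp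
    also have "E \<inter> {e. x \<in> e} = {e\<in>E. x \<in> e}" by blast
    finally show "(\<Sum>e\<in>E. if x \<in> e then 1 else 0) = card {e\<in>E. x \<in> e}" .
  qed
  finally show ?thesis by (simp add: card_edges_at[OF g])
qed

lemma card_edges_le: "graph_on n E \<Longrightarrow> real (card E) \<le> (real n)\<^sup>2 / 2"
proof -
  assume g: "graph_on n E"
  have "(\<Sum>x<n. card (nbrs E x)) \<le> (\<Sum>x<n. n)"
  proof (intro sum_mono)
    fix x
    have "nbrs E x \<subseteq> {..<n}" by (rule nbr_graph.N_subset[OF graph_on_nbr_graph[OF g]])
    then show "card (nbrs E x) \<le> n" using card_mono[of "{..<n}" "nbrs E x"] by simp
  qed
  then have "2 * card E \<le> n * n" using handshake[OF g] by simp
  then have "2 * real (card E) \<le> real n * real n" by (metis of_nat_le_iff of_nat_mult of_nat_numeral)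
  then show ?thesis by (simp add: power2_eq_square)
qed

lemma finite_book_sizes:
  assumes g: "graph_on n E"
  shows "finite ({card (nbrs E u \<inter> nbrs E v) | u v. {u, v} \<in> E \<and> u \<noteq> v} \<union> {0})"
proof -
  have "{card (nbrs E u \<inter> nbrs E v) | u v. {u, v} \<in> E \<and> u \<noteq> v}
      \<subseteq> (\<lambda>(u, v). card (nbrs E u \<inter> nbrs E v)) ` ({..<n} \<times> {..<n})"
  proof
    fix z assume "z \<in> {card (nbrs E u \<inter> nbrs E v) | u v. {u, v} \<in> E \<and> u \<noteq> v}"
    then obtain u v where "z = card (nbrs E u \<inter> nbrs E v)" "{u, v} \<in> E" by auto
    then show "z \<in> (\<lambda>(u, v). card (nbrs E u \<inter> nbrs E v)) ` ({..<n} \<times> {..<n})"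
      using graph_on_edge[OF g] by (intro image_eqI[where x="(u, v)"]) auto
  qed
  then have "finite {card (nbrs E u \<inter> nbrs E v) | u v. {u, v} \<in> E \<and> u \<noteq> v}"
    by (rule finite_subset) simp
  then show ?thesis by simp
qed

lemma book_le_bk:
  assumes g: "graph_on n E" and e: "{u, v} \<in> E"
  shows "card (nbrs E u \<inter> nbrs E v) \<le> bk E"
  unfolding bk_def using e graph_on_edge(1)[OF g e] by (intro Max_ge[OF finite_book_sizes[OF g]]) blast

lemma bk_le:
  assumes "graph_on n E" "\<And>u v. {u, v} \<in> E \<Longrightarrow> card (nbrs E u \<inter> nbrs E v) \<le> B"
  shows "bk E \<le> B"
  unfolding bk_def using assms(2) by (subst Max_le_iff[OF finite_book_sizes[OF assms(1)]]) auto

lemma finite_TG: "finite (TG n f)"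
  by (rule finite_subset[of _ "Pow (Pow {0..<n})"]) (auto simp: TG_def graph_on_def)

lemma gamma_le: "E \<in> TG n f \<Longrightarrow> gamma n f \<le> bk E"
  unfolding gamma_def using finite_TG by (intro Min_le) auto

lemma gamma_attained:
  assumes "TG n f \<noteq> {}"
  obtains E where "E \<in> TG n f" "bk E = gamma n f"
proof -
  have "gamma n f \<in> bk ` TG n f" unfolding gamma_def using assms finite_TG by (intro Min_in) auto
  then show ?thesis using that by auto
qed

lemma small_book_graph_of_graph:
  assumes g: "graph_on n E" and t: "every_edge_in_triangle E"
    and book: "\<And>u v. {u, v} \<in> E \<Longrightarrow> real (card (nbrs E u \<inter> nbrs E v)) \<le> Q"
    and "24 * Q < real n" and "2 * (real n)\<^sup>2 \<le> Q ^ 3"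
  shows "small_book_graph {..<n} (nbrs E) Q"
proof -
  interpret nbr_graph "{..<n}" "nbrs E" by (rule graph_on_nbr_graph[OF g])
  show ?thesis
  proof
    show "y \<in> nbrs E x \<Longrightarrow> real (card (nbrs E x \<inter> nbrs E y)) \<le> Q" for x y
      using book by (simp add: nbrs_def)
    show "\<exists>w. w \<in> nbrs E x \<inter> nbrs E y" if "y \<in> nbrs E x" for x y
    proof -
      have "{x, y} \<in> E" using that by (simp add: nbrs_def)
      then obtain w where "{x, w} \<in> E" "{y, w} \<in> E"
        using t graph_on_edge[OF g] unfolding every_edge_in_triangle_def by blast
      then show ?thesis by (auto simp: nbrs_def)
    qed
  qed (use assms in simp_all)
qed

lemma (in small_book_graph) edges_eq_card:
  assumes "graph_on n E" "V = {..<n}" "N = nbrs E"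
  shows "edges = real (card E)"
proof -
  have "(\<Sum>x\<in>V. real (card (N x))) = real (\<Sum>x<n. card (nbrs E x))" using assms(2,3) by simp
  then show ?thesis using handshake[OF assms(1)] by (simp add: edges_def)
qed

lemma gamma_gt:
  fixes f :: "nat \<Rightarrow> real" and Q e :: real
  assumes e0: "0 < e" and e1: "e \<le> 1 / 2" and f0: "0 < f n" and fe: "f n \<le> e / 1000 * real n"
    and Q0: "0 \<le> Q" and Qe: "Q \<le> e / 1000 * real n" and Q3: "2 * (real n)\<^sup>2 \<le> Q ^ 3"
    and QF: "8 * Q\<^sup>2 * f n = (1 - e)\<^sup>2 * (real n)\<^sup>2" and ne: "TG n f \<noteq> {}"
  shows "Q < real (gamma n f)"
proof (rule ccontr)
  assume "\<not> Q < real (gamma n f)"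
  obtain E where E: "E \<in> TG n f" and bkE: "bk E = gamma n f" using gamma_attained[OF ne] .
  have g: "graph_on n E" and t: "every_edge_in_triangle E"
    and mlow: "(real n)\<^sup>2 / 4 - f n * real n < real (card E)"
    using E by (auto simp: TG_def)
  have "0 < e / 1000 * real n" using f0 fe by linarith
  then have n0: "0 < real n" using e0 by (simp add: zero_less_mult_iff)
  have "e / 1000 * real n \<le> 1 / 2000 * real n" by (rule mult_right_mono) (use e1 in auto)
  then have small: "2000 * Q \<le> real n" "2000 * f n \<le> real n" using Qe fe by linarith+
  have "real (card (nbrs E u \<inter> nbrs E v)) \<le> Q" if "{u, v} \<in> E" for u v
    using book_le_bk[OF g that] bkE \<open>\<not> Q < real (gamma n f)\<close> by linarith
  then interpret small_book_graph "{..<n}" "nbrs E" Q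
    using small n0 Q3 by (intro small_book_graph_of_graph[OF g t]) auto
  have m: "edges = real (card E)" using edges_eq_card[OF g] by simp
  have "nL < 32 * f n"
  proof (rule few_low_vertices[OF n0 f0 small(2) Q0 small(1)])
    show "(real n)\<^sup>2 / 4 - f n * real n < edges" "edges \<le> (real n)\<^sup>2 / 2"
      using mlow card_edges_le[OF g] by (simp_all add: m)
    show "3 * real n / 8 \<le> 2 * edges / real n \<Longrightarrow>
        nL * (2 * edges / real n - 3 * real n / 8)\<^sup>2 \<le> edges * (real n + Q) - 4 * edges\<^sup>2 / real n"
      using low_variance by simp
    show "nL * real n / 4 - 3 * nL\<^sup>2 / 2 \<le> 2 * ((real n)\<^sup>2 / 4 - edges)"
      using edges_deficit_bound by simp
  qed simp
  then show False
    using book_size_contradiction[OF n0 f0 _ Q0 _ e0 e1 QF, of edges "nL"] edges_kappa_bound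
      mlow fe Qe by (simp add: m kappa_def)
qed

section \<open>The extremal construction\<close>

lemma card_residue_class_le:
  assumes "0 < k"
  shows "card {y \<in> {s..<s + m}. (y - s) mod k = j} \<le> m div k + 1"
proof -
  let ?X = "{y \<in> {s..<s + m}. (y - s) mod k = j}"
  have inj: "inj_on (\<lambda>y. (y - s) div k) ?X"
  proof (rule inj_onI)
    fix x y assume x: "x \<in> ?X" and y: "y \<in> ?X" and eq: "(x - s) div k = (y - s) div k"
    have "x - s = (x - s) div k * k + (x - s) mod k" by simp
    also have "\<dots> = (y - s) div k * k + (y - s) mod k" using eq x y by simp
    also have "\<dots> = y - s" by simp
    finally show "x = y" using x y by auto
  qed
  have img: "(\<lambda>y. (y - s) div k) ` ?X \<subseteq> {..m div k}"
  proof
    fix z assume "z \<in> (\<lambda>y. (y - s) div k) ` ?X"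
    then obtain y where y: "y \<in> ?X" "z = (y - s) div k" by auto
    then have "y - s \<le> m" by auto
    then show "z \<in> {..m div k}" using y by (simp add: div_le_mono)
  qed
  have "card ?X = card ((\<lambda>y. (y - s) div k) ` ?X)" using inj by (simp add: card_image)
  also have "\<dots> \<le> card {..m div k}" using img by (intro card_mono) auto
  finally show ?thesis by simp
qed

text \<open>A complete bipartite graph between A and B together with a k \<times> k grid W, whose vertex w
  sits in row w div k and column w mod k; the vertices of A are joined to a row and those of B
  to a column of the grid, according to their residues mod k.\<close>
locale grid_construction =
  fixes n k a :: nat
  assumes k_pos: "0 < k" and k_le_a: "k \<le> a" and a_le_rest: "a \<le> n - k * k - a"
    and fits: "k * k + a \<le> n"
begin

definition "b = n - k * k - a"

lemma a_le_b: "a \<le> b" and n_eq: "n = k * k + a + b"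
  using a_le_rest fits by (simp_all add: b_def)

definition "A = {k * k ..< k * k + a}"
definition "B = {k * k + a ..< n}"
definition "W = {..< k * k}"
definition "row x = (x - k * k) mod k"
definition "col y = (y - k * k - a) mod k"

definition "adj u v \<longleftrightarrow>
   (u \<in> A \<and> v \<in> B) \<or> (v \<in> A \<and> u \<in> B)
 \<or> (u \<in> W \<and> v \<in> A \<and> u div k = row v) \<or> (v \<in> W \<and> u \<in> A \<and> v div k = row u)
 \<or> (u \<in> W \<and> v \<in> B \<and> u mod k = col v) \<or> (v \<in> W \<and> u \<in> B \<and> v mod k = col u)"

definition "graph = {{u, v} | u v. adj u v}"

lemma adj_sym: "adj u v = adj v u"
  unfolding adj_def by blast

lemma parts_disjoint: "x \<in> A \<Longrightarrow> x \<notin> B" "x \<in> A \<Longrightarrow> x \<notin> W" "x \<in> B \<Longrightarrow> x \<notin> W"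
  by (auto simp: A_def B_def W_def)

lemma finite_parts: "finite A" "finite B" "finite W"
  by (auto simp: A_def B_def W_def)

lemma card_A: "card A = a" and card_B: "card B = b"
  by (auto simp: A_def B_def b_def)

lemma parts_cover: "{..<n} = W \<union> A \<union> B"
  using fits by (auto simp: A_def B_def W_def)

lemma adj_A: "u \<in> A \<Longrightarrow> adj u w \<longleftrightarrow> w \<in> B \<or> (w \<in> W \<and> w div k = row u)"
  unfolding adj_def using parts_disjoint by blast

lemma adj_B: "u \<in> B \<Longrightarrow> adj u w \<longleftrightarrow> w \<in> A \<or> (w \<in> W \<and> w mod k = col u)"
  unfolding adj_def using parts_disjoint by blast

lemma adj_W: "u \<in> W \<Longrightarrow> adj u w \<longleftrightarrow> (w \<in> A \<and> u div k = row w) \<or> (w \<in> B \<and> u mod k = col w)"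
  unfolding adj_def using parts_disjoint by blast

lemma nbrs_graph: "nbrs graph u = {v. adj u v}"
proof -
  have "{u, v} \<in> graph \<longleftrightarrow> adj u v" for v
  proof
    assume "{u, v} \<in> graph"
    then obtain u' v' where "{u, v} = {u', v'}" "adj u' v'" by (auto simp: graph_def)
    then show "adj u v" using adj_sym by (auto simp: doubleton_eq_iff)
  qed (auto simp: graph_def)
  then show ?thesis by (auto simp: nbrs_def)
qed

lemma graph_on_graph: "graph_on n graph"
  unfolding graph_on_def
proof
  fix e assume "e \<in> graph"
  then obtain u v where e: "e = {u, v}" and "adj u v" by (auto simp: graph_def)
  then have "u \<noteq> v" "u < n" "v < n"
    using fits unfolding adj_def A_def B_def W_def by auto
  then show "e \<subseteq> {0..<n} \<and> card e = 2" using e by auto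
qed

lemma grid_cell:
  assumes "i < k" "j < k"
  shows "i * k + j \<in> W" "(i * k + j) div k = i" "(i * k + j) mod k = j"
proof -
  have "Suc i * k \<le> k * k" using assms by (intro mult_le_mono1) simp
  then show "i * k + j \<in> W" using assms by (simp add: W_def)
qed (use assms in auto)

lemma row_lt: "row x < k" and col_lt: "col y < k"
  using k_pos by (auto simp: row_def col_def)

lemma common_nbr_AB: "u \<in> A \<Longrightarrow> v \<in> B \<Longrightarrow> \<exists>w. adj u w \<and> adj v w"
  using grid_cell[OF row_lt[of u] col_lt[of v]]
  by (intro exI[of _ "row u * k + col v"]) (simp add: adj_A adj_B)

lemma common_nbr_WA: "u \<in> W \<Longrightarrow> v \<in> A \<Longrightarrow> u div k = row v \<Longrightarrow> \<exists>w. adj u w \<and> adj v w"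
proof -
  assume u: "u \<in> W" and v: "v \<in> A"
  define w where "w = k * k + a + u mod k"
  have "u mod k < k" using k_pos by simp
  then have "w \<in> B" using k_le_a a_le_rest fits by (auto simp: w_def B_def)
  moreover have "col w = u mod k" by (simp add: w_def col_def)
  ultimately show ?thesis using u v by (intro exI[of _ w]) (simp add: adj_W adj_A)
qed

lemma common_nbr_WB: "u \<in> W \<Longrightarrow> v \<in> B \<Longrightarrow> u mod k = col v \<Longrightarrow> \<exists>w. adj u w \<and> adj v w"
proof -
  assume u: "u \<in> W" and v: "v \<in> B"
  define w where "w = k * k + u div k"
  have "u div k < k" using u by (simp add: W_def less_mult_imp_div_less)
  then have "w \<in> A" using k_le_a by (auto simp: w_def A_def)
  moreover have "row w = u div k" using \<open>u div k < k\<close> by (simp add: w_def row_def)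
  ultimately show ?thesis using u v by (intro exI[of _ w]) (simp add: adj_W adj_B)
qed

lemma common_nbr: "adj u v \<Longrightarrow> \<exists>w. adj u w \<and> adj v w"
  unfolding adj_def[of u v]
proof (elim disjE conjE)
  assume "u \<in> A" "v \<in> B" then show ?thesis by (rule common_nbr_AB)
next
  assume "v \<in> A" "u \<in> B" then show ?thesis using common_nbr_AB[of v u] by blast
next
  assume "u \<in> W" "v \<in> A" "u div k = row v" then show ?thesis by (rule common_nbr_WA)
next
  assume "v \<in> W" "u \<in> A" "v div k = row u" then show ?thesis using common_nbr_WA[of v u] by blast
next
  assume "u \<in> W" "v \<in> B" "u mod k = col v" then show ?thesis by (rule common_nbr_WB)
next
  assume "v \<in> W" "u \<in> B" "v mod k = col u" then show ?thesis using common_nbr_WB[of v u] by blast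
qed

lemma graph_triangles: "every_edge_in_triangle graph"
  unfolding every_edge_in_triangle_def
proof (intro allI impI)
  fix u v assume "{u, v} \<in> graph"
  then have "adj u v" using nbrs_graph[of u] unfolding nbrs_def by blast
  then obtain w where "adj u w" "adj v w" using common_nbr by blast
  then show "\<exists>w. {u, w} \<in> graph \<and> {v, w} \<in> graph" unfolding graph_def by blast
qed

lemma card_row_class: "card {x\<in>A. row x = j} \<le> b div k + 1"
proof -
  have "card {x\<in>A. row x = j} \<le> a div k + 1"
    using card_residue_class_le[OF k_pos, of "k * k" a j] by (simp add: A_def row_def)
  also have "\<dots> \<le> b div k + 1" using a_le_b by (simp add: div_le_mono)
  finally show ?thesis .
qed

lemma card_col_class: "card {y\<in>B. col y = j} \<le> b div k + 1"
proof -
  have "B = {k * k + a ..< k * k + a + b}" using fits by (simp add: B_def b_def)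
  then show ?thesis
    using card_residue_class_le[OF k_pos, of "k * k + a" b j] by (simp add: col_def diff_diff_left)
qed

abbreviation "common u v \<equiv> {w. adj u w} \<inter> {w. adj v w}"

lemma card_common_AB: "u \<in> A \<Longrightarrow> v \<in> B \<Longrightarrow> card (common u v) \<le> 1"
proof -
  assume u: "u \<in> A" and v: "v \<in> B"
  have "common u v \<subseteq> {row u * k + col v}"
  proof
    fix w assume "w \<in> common u v"
    then have "w div k = row u" "w mod k = col v" using adj_A[OF u] adj_B[OF v] parts_disjoint by auto
    then show "w \<in> {row u * k + col v}" by (metis div_mult_mod_eq singletonI)
  qed
  then have "card (common u v) \<le> card {row u * k + col v}" by (intro card_mono) auto
  then show ?thesis by simp
qed

lemma card_common_WA: "u \<in> W \<Longrightarrow> v \<in> A \<Longrightarrow> card (common u v) \<le> b div k + 1"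
proof -
  assume u: "u \<in> W" and v: "v \<in> A"
  have "common u v \<subseteq> {y\<in>B. col y = u mod k}"
    using adj_W[OF u] adj_A[OF v] parts_disjoint by auto
  then have "card (common u v) \<le> card {y\<in>B. col y = u mod k}"
    using finite_parts by (intro card_mono) auto
  then show ?thesis using card_col_class le_trans by blast
qed

lemma card_common_WB: "u \<in> W \<Longrightarrow> v \<in> B \<Longrightarrow> card (common u v) \<le> b div k + 1"
proof -
  assume u: "u \<in> W" and v: "v \<in> B"
  have "common u v \<subseteq> {x\<in>A. row x = u div k}"
    using adj_W[OF u] adj_B[OF v] parts_disjoint by auto
  then have "card (common u v) \<le> card {x\<in>A. row x = u div k}"
    using finite_parts by (intro card_mono) auto
  then show ?thesis using card_row_class le_trans by blast
qed

lemma card_common_le: "adj u v \<Longrightarrow> card (common u v) \<le> b div k + 1"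
  unfolding adj_def[of u v]
proof (elim disjE conjE)
  assume "u \<in> A" "v \<in> B" then show ?thesis using card_common_AB by fastforce
next
  assume "v \<in> A" "u \<in> B" then show ?thesis using card_common_AB[of v u] by (simp add: Int_commute)
next
  assume "u \<in> W" "v \<in> A" then show ?thesis by (rule card_common_WA)
next
  assume "v \<in> W" "u \<in> A" then show ?thesis using card_common_WA[of v u] by (simp add: Int_commute)
next
  assume "u \<in> W" "v \<in> B" then show ?thesis by (rule card_common_WB)
next
  assume "v \<in> W" "u \<in> B" then show ?thesis using card_common_WB[of v u] by (simp add: Int_commute)
qed

lemma bk_graph_le: "bk graph \<le> b div k + 1"
proof (rule bk_le[OF graph_on_graph])
  fix u v assume "{u, v} \<in> graph"
  then have "adj u v" using nbrs_graph[of u] unfolding nbrs_def by blast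
  then show "card (nbrs graph u \<inter> nbrs graph v) \<le> b div k + 1"
    unfolding nbrs_graph by (rule card_common_le)
qed

lemma card_grid_row: "i < k \<Longrightarrow> card {w\<in>W. w div k = i} = k"
proof -
  assume i: "i < k"
  have "{w\<in>W. w div k = i} = (\<lambda>j. i * k + j) ` {..<k}"
  proof
    show "{w\<in>W. w div k = i} \<subseteq> (\<lambda>j. i * k + j) ` {..<k}"
    proof
      fix w assume w: "w \<in> {w\<in>W. w div k = i}"
      then have "w = i * k + w mod k" by (metis (mono_tags, lifting) div_mult_mod_eq mem_Collect_eq)
      moreover have "w mod k < k" using k_pos by simp
      ultimately show "w \<in> (\<lambda>j. i * k + j) ` {..<k}" by blast
    qed
    show "(\<lambda>j. i * k + j) ` {..<k} \<subseteq> {w\<in>W. w div k = i}" using grid_cell[OF i] by auto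
  qed
  moreover have "inj_on (\<lambda>j. i * k + j) {..<k}" by (auto simp: inj_on_def)
  ultimately show ?thesis by (simp add: card_image)
qed

lemma card_grid_col: "j < k \<Longrightarrow> card {w\<in>W. w mod k = j} = k"
proof -
  assume j: "j < k"
  have "{w\<in>W. w mod k = j} = (\<lambda>i. i * k + j) ` {..<k}"
  proof
    show "{w\<in>W. w mod k = j} \<subseteq> (\<lambda>i. i * k + j) ` {..<k}"
    proof
      fix w assume w: "w \<in> {w\<in>W. w mod k = j}"
      then have "w = w div k * k + j" by (metis (mono_tags, lifting) div_mult_mod_eq mem_Collect_eq)
      moreover have "w div k < k" using w by (simp add: W_def less_mult_imp_div_less)
      ultimately show "w \<in> (\<lambda>i. i * k + j) ` {..<k}" by blast
    qed
    show "(\<lambda>i. i * k + j) ` {..<k} \<subseteq> {w\<in>W. w mod k = j}" using grid_cell[OF _ j] by auto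
  qed
  moreover have "inj_on (\<lambda>i. i * k + j) {..<k}" using k_pos by (auto simp: inj_on_def)
  ultimately show ?thesis by (simp add: card_image)
qed

lemma degree_A:
  assumes "x \<in> A"
  shows "card {w. adj x w} = b + k" "{w. adj x w} \<inter> W = {w\<in>W. w div k = row x}"
proof -
  have eq: "{w. adj x w} = B \<union> {w\<in>W. w div k = row x}" using adj_A[OF assms] by auto
  then show "{w. adj x w} \<inter> W = {w\<in>W. w div k = row x}" using parts_disjoint by blast
  have "card {w. adj x w} = card B + card {w\<in>W. w div k = row x}"
    unfolding eq by (rule card_Un_disjoint) (use finite_parts parts_disjoint in auto)
  then show "card {w. adj x w} = b + k" using card_B card_grid_row[OF row_lt] by simp
qed

lemma degree_B:
  assumes "y \<in> B"
  shows "card {w. adj y w} = a + k" "{w. adj y w} \<inter> W = {w\<in>W. w mod k = col y}"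
proof -
  have eq: "{w. adj y w} = A \<union> {w\<in>W. w mod k = col y}" using adj_B[OF assms] by auto
  then show "{w. adj y w} \<inter> W = {w\<in>W. w mod k = col y}" using parts_disjoint by blast
  have "card {w. adj y w} = card A + card {w\<in>W. w mod k = col y}"
    unfolding eq by (rule card_Un_disjoint) (use finite_parts parts_disjoint in auto)
  then show "card {w. adj y w} = a + k" using card_A card_grid_col[OF col_lt] by simp
qed

text \<open>Every vertex of A and of B has exactly k neighbours in the grid.\<close>
lemma sum_degree_grid_ge: "real k * (real a + real b) \<le> (\<Sum>w\<in>W. real (card {v. adj w v}))"
proof -
  interpret nbr_graph "{..<n}" "nbrs graph" by (rule graph_on_nbr_graph[OF graph_on_graph])
  have "(\<Sum>w\<in>W. real (card (nbrs graph w \<inter> A))) + (\<Sum>w\<in>W. real (card (nbrs graph w \<inter> B)))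
      = (\<Sum>x\<in>A. real (card (nbrs graph x \<inter> W))) + (\<Sum>y\<in>B. real (card (nbrs graph y \<inter> W)))"
    using sum_card_nbrs_swap finite_parts by simp
  also have "\<dots> = (\<Sum>x\<in>A. real k) + (\<Sum>y\<in>B. real k)"
    by (intro arg_cong2[where f="(+)"] sum.cong refl)
      (simp_all add: nbrs_graph degree_A degree_B card_grid_row card_grid_col row_lt col_lt)
  also have "\<dots> = real k * (real a + real b)" using card_A card_B by (simp add: algebra_simps)
  finally have "real k * (real a + real b)
      = (\<Sum>w\<in>W. real (card (nbrs graph w \<inter> A)) + real (card (nbrs graph w \<inter> B)))"
    by (simp add: sum.distrib)
  also have "\<dots> \<le> (\<Sum>w\<in>W. real (card (nbrs graph w)))"
  proof (intro sum_mono)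
    fix w
    have "card (nbrs graph w \<inter> A) + card (nbrs graph w \<inter> B) = card (nbrs graph w \<inter> (A \<union> B))"
      by (subst card_Un_disjoint[symmetric]) (use finite_parts parts_disjoint in \<open>auto simp: Int_Un_distrib\<close>)
    also have "\<dots> \<le> card (nbrs graph w)" by (intro card_mono finite_N) auto
    finally show "real (card (nbrs graph w \<inter> A)) + real (card (nbrs graph w \<inter> B))
        \<le> real (card (nbrs graph w))" by linarith
  qed
  finally show ?thesis by (simp add: nbrs_graph)
qed

lemma card_graph_ge: "real a * real b + real k * (real a + real b) \<le> real (card graph)"
proof -
  let ?d = "\<lambda>x. real (card {v. adj x v})"
  have "2 * real (card graph) = real (\<Sum>x<n. card (nbrs graph x))"
    using handshake[OF graph_on_graph] by simp
  also have "\<dots> = (\<Sum>x\<in>W \<union> A \<union> B. ?d x)" by (simp add: parts_cover nbrs_graph)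
  also have "\<dots> = (\<Sum>x\<in>W. ?d x) + (\<Sum>x\<in>A. ?d x) + (\<Sum>x\<in>B. ?d x)"
  proof -
    have "(W \<union> A) \<inter> B = {}" "W \<inter> A = {}" using parts_disjoint by blast+
    then show ?thesis using finite_parts by (simp add: sum.union_disjoint)
  qed
  also have "(\<Sum>x\<in>A. ?d x) = real a * (real b + real k)" using card_A by (simp add: degree_A)
  also have "(\<Sum>x\<in>B. ?d x) = real b * (real a + real k)" using card_B by (simp add: degree_B)
  finally show ?thesis using sum_degree_grid_ge by (simp add: algebra_simps)
qed

lemma real_n_eq: "real n = real a + real b + (real k)\<^sup>2"
  using arg_cong[OF n_eq, of real] by (simp add: power2_eq_square)

lemma graph_in_TG:
  assumes ba: "b \<le> a + 1" and K1: "(real k - 1)\<^sup>2 \<le> 2 * f n" and K2: "(real k)\<^sup>2 \<le> 4 * f n"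
  shows "graph \<in> TG n f"
proof -
  have "real a \<le> real b" "real b \<le> real a + 1" "1 \<le> real a + real b"
    using a_le_b ba k_le_a k_pos by linarith+
  from balanced_edge_count[OF this K1 K2]
  have "(real n)\<^sup>2 / 4 - f n * real n < real (card graph)"
    using card_graph_ge unfolding real_n_eq by linarith
  moreover have "0 < real (card graph)"
  proof -
    have "0 < real a * real b" using k_le_a k_pos a_le_b by simp
    then show ?thesis using card_graph_ge by (smt (verit) of_nat_0_le_iff mult_nonneg_nonneg)
  qed
  ultimately show ?thesis using graph_on_graph graph_triangles by (simp add: TG_def)
qed

lemma bk_graph_le_half_quotient:
  assumes ba: "b \<le> a + 1" and k4: "4 \<le> k"
  shows "real (bk graph) \<le> real n / (2 * real k)"
proof -
  have K0: "0 < real k" using k_pos by simp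
  have "real (b div k) * real k \<le> real b"
    by (metis of_nat_le_iff of_nat_mult div_times_less_eq_dividend)
  then have "real (b div k) \<le> real b / real k" using K0 by (simp add: field_simps)
  moreover have "real b \<le> (real a + real b + 1) / 2"
    using ba of_nat_le_iff[of b "a + 1", where 'a=real] by simp
  moreover have "real a + real b + 1 + 2 * real k \<le> real n"
  proof -
    have "4 \<le> real k" using k4 by simp
    moreover have "4 * real k \<le> real k * real k" using k4 by (intro mult_right_mono) auto
    ultimately show ?thesis unfolding real_n_eq power2_eq_square by linarith
  qed
  ultimately have "real (b div k) + 1 \<le> real n / (2 * real k)"
    using K0 by (simp add: field_simps)
  moreover have "real (bk graph) \<le> real (b div k) + 1"
    using bk_graph_le by (metis of_nat_Suc of_nat_mono Suc_eq_plus1 add.commute)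
  ultimately show ?thesis by linarith
qed

end

text \<open>For k the least integer above sqrt (2 f), the grid construction has more than
  n^2/4 - f n edges and books of size at most n / (2k).\<close>
lemma gamma_lt_sqrt:
  fixes f :: "nat \<Rightarrow> real"
  assumes f9: "9 \<le> 2 * f n" and f8: "8 * f n \<le> real n" and n64: "64 \<le> n"
  shows "TG n f \<noteq> {}" "real (gamma n f) < real n / (2 * sqrt (2 * f n))"
proof -
  define s where "s = sqrt (2 * f n)"
  have s2: "s\<^sup>2 = 2 * f n" using f9 by (simp add: s_def)
  have s3: "3 \<le> s" using real_sqrt_le_mono[OF f9] by (simp add: s_def real_sqrt_unique[of 3 9])
  define k where "k = nat \<lfloor>s\<rfloor> + 1"
  have k: "real k = of_int \<lfloor>s\<rfloor> + 1" using s3 by (simp add: k_def)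
  then have K: "real k - 1 \<le> s" "s < real k" by linarith+
  have k4: "4 \<le> k" using K(1) s3 k by linarith
  have s_le: "s \<le> 2 * f n / 3"
  proof -
    have "3 * s \<le> s * s" using s3 by (intro mult_right_mono) auto
    then show ?thesis using s2 by (simp add: power2_eq_square)
  qed
  have "(real k)\<^sup>2 + 2 * real k \<le> (s + 1)\<^sup>2 + 2 * (s + 1)"
    using K(1) s3 by (intro add_mono power_mono) auto
  also have "\<dots> \<le> real n" using s2 s_le f9 f8 n64 by (simp add: power2_eq_square algebra_simps)
  finally have "real (k * k + 2 * k) \<le> real n" by (simp add: power2_eq_square)
  then have kn: "k * k + 2 * k \<le> n" by (simp only: of_nat_le_iff)
  define a where "a = (n - k * k) div 2"
  interpret grid_construction n k a
    using kn k4 unfolding a_def by unfold_locales auto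
  have "(n - k * k) - (n - k * k) div 2 \<le> (n - k * k) div 2 + 1" by linarith
  then have ba: "b \<le> a + 1" using b_def by (simp add: a_def)
  have "graph \<in> TG n f"
  proof (rule graph_in_TG)
    show "b \<le> a + 1" by (rule ba)
    show "(real k - 1)\<^sup>2 \<le> 2 * f n" using K(1) k4 power_mono[of "real k - 1" s 2] s2 by simp
    have "(real k)\<^sup>2 \<le> (s + 1)\<^sup>2" using K(1) k4 by (intro power_mono) auto
    then show "(real k)\<^sup>2 \<le> 4 * f n" using s2 s_le f9 by (simp add: power2_eq_square algebra_simps)
  qed
  then show "TG n f \<noteq> {}" by blast
  have "real (gamma n f) \<le> real (bk graph)" using gamma_le[OF \<open>graph \<in> TG n f\<close>] by simp
  also have "\<dots> \<le> real n / (2 * real k)" using ba k4 by (rule bk_graph_le_half_quotient)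
  also have "\<dots> < real n / (2 * s)" using K(2) s3 n64 by (intro divide_strict_left_mono) auto
  finally show "real (gamma n f) < real n / (2 * sqrt (2 * f n))" by (simp add: s_def)
qed

section \<open>Asymptotics\<close>

lemma eventually_powr_le_powr:
  fixes a b C :: real
  assumes "a < b" "0 < C"
  shows "\<forall>\<^sub>F n in sequentially. real n powr a \<le> C * real n powr b"
proof -
  have "((\<lambda>n. real n powr (a - b)) \<longlongrightarrow> 0) sequentially"
    using assms(1) by (intro tendsto_neg_powr filterlim_real_sequentially) simp
  then have "\<forall>\<^sub>F n in sequentially. real n powr (a - b) < C"
    using assms(2) by (rule order_tendstoD)
  moreover have "\<forall>\<^sub>F n in sequentially. 0 < real n"
    by (simp add: eventually_sequentially) (metis of_nat_0_less_iff Suc_le_eq)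
  ultimately show ?thesis
    by eventually_elim (simp add: powr_diff divide_less_eq less_imp_le)
qed

lemma div_sqrt_powr_eq:
  fixes x c :: real
  assumes "0 < x"
  shows "x / (2 * sqrt (2 * x powr c)) = 1 / (2 * sqrt 2) * x powr (1 - c / 2)"
proof -
  have "sqrt (2 * x powr c) = sqrt 2 * x powr (c / 2)"
    using assms by (simp add: real_sqrt_mult powr_half_sqrt_powr)
  moreover have "x powr (1 - c / 2) = x / x powr (c / 2)" using assms by (simp add: powr_diff)
  ultimately show ?thesis by (simp add: field_simps)
qed

lemma eventually_gamma_upper:
  fixes c :: real
  assumes "0 < c" "c < 1"
  shows "\<forall>\<^sub>F n in sequentially. TG n (\<lambda>k. real k powr c) \<noteq> {} \<and>
           real (gamma n (\<lambda>k. real k powr c)) < 1 / (2 * sqrt 2) * real n powr (1 - c / 2)"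
proof -
  have "\<forall>\<^sub>F n in sequentially. real n powr 0 \<le> 2 / 9 * real n powr c"
    by (rule eventually_powr_le_powr) (use assms in auto)
  moreover have "\<forall>\<^sub>F n in sequentially. real n powr c \<le> 1 / 8 * real n powr 1"
    by (rule eventually_powr_le_powr) (use assms in auto)
  ultimately show ?thesis using eventually_ge_at_top[of 64]
  proof eventually_elim
    case (elim n)
    then have n: "0 < real n" by simp
    have "9 \<le> 2 * real n powr c" "8 * real n powr c \<le> real n" using elim n by simp_all
    with elim show ?case
      using gamma_lt_sqrt[of "\<lambda>k. real k powr c" n] div_sqrt_powr_eq[OF n] by simp
  qed
qed

lemma eventually_gamma_lower:
  fixes c e :: real
  assumes c: "0 < c" "c < 2 / 3" and e: "0 < e" "e \<le> 1 / 2"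
  shows "\<forall>\<^sub>F n in sequentially.
           (1 - e) / (2 * sqrt 2) * real n powr (1 - c / 2) < real (gamma n (\<lambda>k. real k powr c))"
proof -
  define K where "K = (1 - e) / (2 * sqrt 2)"
  have K0: "0 < K" using e by (simp add: K_def)
  have K2: "8 * K\<^sup>2 = (1 - e)\<^sup>2" by (simp add: K_def power_divide power_mult_distrib)
  have "\<forall>\<^sub>F n in sequentially. real n powr c \<le> e / 1000 * real n powr 1"
    by (rule eventually_powr_le_powr) (use c e in auto)
  moreover have "\<forall>\<^sub>F n in sequentially. real n powr (1 - c / 2) \<le> e / 1000 / K * real n powr 1"
    by (rule eventually_powr_le_powr) (use c e K0 in auto)
  moreover have "\<forall>\<^sub>F n in sequentially. real n powr 2 \<le> K ^ 3 / 2 * real n powr (3 * (1 - c / 2))"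
    by (rule eventually_powr_le_powr) (use c K0 in auto)
  moreover have "\<forall>\<^sub>F n in sequentially. TG n (\<lambda>k. real k powr c) \<noteq> {}"
    using eventually_gamma_upper[of c] c by (auto elim: eventually_mono)
  ultimately show ?thesis using eventually_gt_at_top[of 0] unfolding K_def[symmetric]
  proof eventually_elim
    case (elim n)
    then have n: "0 < real n" by simp
    let ?x = "real n powr (1 - c / 2)"
    have x2: "?x\<^sup>2 * real n powr c = (real n)\<^sup>2"
      using n by (simp add: powr_power flip: powr_add)
    have x3: "?x ^ 3 = real n powr (3 * (1 - c / 2))"
      using n by (simp add: powr_power)
    show ?case
    proof (rule gamma_gt)
      show "K * ?x \<le> e / 1000 * real n" using elim(2) K0 n by (simp add: field_simps)
      have "real n powr 2 = (real n)\<^sup>2" using n by simp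
      then show "2 * (real n)\<^sup>2 \<le> (K * ?x) ^ 3"
        using elim(3) unfolding power_mult_distrib x3 by linarith
      show "8 * (K * ?x)\<^sup>2 * real n powr c = (1 - e)\<^sup>2 * (real n)\<^sup>2"
        using x2 K2 by (simp add: power_mult_distrib mult_ac flip: K2)
    qed (use elim n e K0 in simp_all)
  qed
qed

theorem corollary10:
  shows "(\<forall>c::real. 0 < c \<and> c < 1 \<longrightarrow>
           (\<forall>\<^sub>F n in sequentially.
              real (gamma n (\<lambda>k. real k powr c)) < 1 / (2 * sqrt 2) * real n powr (1 - c / 2)))
       \<and> (\<forall>(c::real) (\<epsilon>::real). 0 < c \<and> c < 2 / 5 \<and> 0 < \<epsilon> \<longrightarrow>
           (\<forall>\<^sub>F n in sequentially.
              real (gamma n (\<lambda>k. real k powr c)) > (1 - \<epsilon>) / (2 * sqrt 2) * real n powr (1 - c / 2)))"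
proof (intro conjI allI impI)
  fix c :: real
  assume "0 < c \<and> c < 1"
  then show "\<forall>\<^sub>F n in sequentially.
      real (gamma n (\<lambda>k. real k powr c)) < 1 / (2 * sqrt 2) * real n powr (1 - c / 2)"
    using eventually_gamma_upper[of c] by (auto elim: eventually_mono)
next
  fix c \<epsilon> :: real
  assume c: "0 < c \<and> c < 2 / 5 \<and> 0 < \<epsilon>"
  define e where "e = min \<epsilon> (1 / 2)"
  have "\<forall>\<^sub>F n in sequentially.
      (1 - e) / (2 * sqrt 2) * real n powr (1 - c / 2) < real (gamma n (\<lambda>k. real k powr c))"
    using c by (intro eventually_gamma_lower) (auto simp: e_def)
  moreover have "(1 - \<epsilon>) / (2 * sqrt 2) * x \<le> (1 - e) / (2 * sqrt 2) * x" if "0 \<le> x" for x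
    using that by (intro mult_right_mono divide_right_mono) (auto simp: e_def)
  ultimately show "\<forall>\<^sub>F n in sequentially.
      real (gamma n (\<lambda>k. real k powr c)) > (1 - \<epsilon>) / (2 * sqrt 2) * real n powr (1 - c / 2)"
    by (elim eventually_mono) (smt (verit) powr_ge_zero)
qed

end
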